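(* For every $\epsilon>0$, the operator $$\hat H(\epsilon):=-\partial_t^2+\frac{t^2}{2(1+\epsilon t^2)^{1/2}}-\frac{1}{\sqrt2\,(1+\epsilon t^2)^{1/4}}$$ on $L^2(\mathbb{R},dt)$ satisfies $\hat H(\epsilon)\ge-\frac{\epsilon}{4}$. Consequently, for every $u>0$ the operator $H_u:=-\partial_v^2+\frac{v^2}{2(u^2+v^2)^{1/2}}-\frac{1}{\sqrt2(u^2+v^2)^{1/4}}$ on $L^2(\mathbb{R},dv)$ satisfies $H_u\ge-\frac{1}{4u^2}$.
   Context: $\hat H(\epsilon)$ and $H_u$ are the self-adjoint operators defined by the closures of their quadratic forms on $C_0^\infty(\mathbb{R})$; inequalities are in the sense of quadratic forms. (Under $v=u^{1/4}t$ one has $H_u=u^{-1/2}\hat H(u^{-3/2})$.) *)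

theory Defs
  imports "HOL-Analysis.Analysis"
begin

definition vderiv :: "(real \<Rightarrow> complex) \<Rightarrow> (real \<Rightarrow> complex)" where
  "vderiv f = (\<lambda>x. vector_derivative f (at x))"

definition smooth_compact :: "(real \<Rightarrow> complex) \<Rightarrow> bool" where
  "smooth_compact f \<longleftrightarrow>
     (\<forall>k::nat. \<forall>x::real. (vderiv ^^ k) f differentiable (at x)) \<and>
     (\<exists>R::real. \<forall>x::real. \<bar>x\<bar> > R \<longrightarrow> f x = 0)"

definition Vhat :: "real \<Rightarrow> real \<Rightarrow> real" where
  "Vhat eps t = t\<^sup>2 / (2 * sqrt (1 + eps * t\<^sup>2))
              - 1 / (sqrt 2 * (1 + eps * t\<^sup>2) powr (1/4))"

definition Vu :: "real \<Rightarrow> real \<Rightarrow> real" where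
  "Vu u v = v\<^sup>2 / (2 * sqrt (u\<^sup>2 + v\<^sup>2))
            - 1 / (sqrt 2 * (u\<^sup>2 + v\<^sup>2) powr (1/4))"

text \<open>Quadratic form of the Schroedinger operator -d^2/dt^2 + V on a test function f:
  integral of |f'|^2 + V |f|^2.\<close>
definition schr_form :: "(real \<Rightarrow> real) \<Rightarrow> (real \<Rightarrow> complex) \<Rightarrow> real" where
  "schr_form V f = (LINT t|lborel. (cmod (vderiv f t))\<^sup>2 + V t * (cmod (f t))\<^sup>2)"

definition L2_norm_sq :: "(real \<Rightarrow> complex) \<Rightarrow> real" where
  "L2_norm_sq f = (LINT t|lborel. (cmod (f t))\<^sup>2)"

end

theory Submission
  imports Defs
begin

(*
  Proof idea (ground-state substitution).  For a test function f and a real C^1 function g,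
    |f' + g f|^2 = |f'|^2 + g (|f|^2)' + g^2 |f|^2 ,
  and integrating g (|f|^2)' by parts gives
    \<integral> |f'|^2 + V |f|^2 = \<integral> |f' + g f|^2 + \<integral> (V + g' - g^2) |f|^2 .
  Hence V + g' - g^2 \<ge> -c pointwise implies the form bound \<ge> -c \<parallel>f\<parallel>^2.

  Both potentials of the theorem belong to the family
    V(t) = t^2 / (2 sqrt w) - 1 / (sqrt 2 w^(1/4)),   w = \<alpha> + \<beta> t^2   (\<alpha>, \<beta> > 0):
  Vhat eps is \<alpha> = 1, \<beta> = eps, and Vu u is \<alpha> = u^2, \<beta> = 1.  For the choice
    g(t) = t / (sqrt 2 w^(1/4)) - \<beta> t / (4 w)
  (minus the logarithmic derivative of an explicit approximate ground state) one computes exactly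
    V + g' - g^2 = -(\<beta>/4) (\<alpha> - 3 \<beta> t^2 / 4) / w^2  \<ge>  -\<beta> / (4 \<alpha>),
  which yields the two bounds -eps/4 and -1/(4 u^2).
*)

lemma smooth_compact_has_derivative:
  assumes "smooth_compact f"
  shows "(f has_vector_derivative vderiv f x) (at x)"
proof -
  have "f differentiable at x"
    using assms unfolding smooth_compact_def by (metis funpow_0)
  then show ?thesis
    unfolding vderiv_def by (simp add: vector_derivative_works[symmetric])
qed

lemma smooth_compact_continuous:
  assumes "smooth_compact f"
  shows "continuous_on UNIV f" "continuous_on UNIV (vderiv f)"
proof -
  have "(vderiv ^^ k) f differentiable at x" for k x
    using assms unfolding smooth_compact_def by blast
  from this[of 0] this[of 1] have "f differentiable at x" "vderiv f differentiable at x" for x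
    by simp_all
  then show "continuous_on UNIV f" "continuous_on UNIV (vderiv f)"
    by (auto intro!: continuous_at_imp_continuous_on differentiable_imp_continuous_within)
qed

lemma smooth_compact_support:
  assumes "smooth_compact f"
  obtains a where "a > 0" "\<And>t. \<bar>t\<bar> \<ge> a \<Longrightarrow> f t = 0 \<and> vderiv f t = 0"
proof -
  obtain R where R: "\<And>x. \<bar>x\<bar> > R \<Longrightarrow> f x = 0"
    using assms unfolding smooth_compact_def by blast
  text \<open>On the open set where f vanishes identically, so does its derivative.\<close>
  have deriv_zero: "vderiv f x = 0" if "\<bar>x\<bar> > R" for x
  proof -
    have "(f has_vector_derivative 0) (at x)"
      by (rule has_vector_derivative_transform_within_open[where f="\<lambda>_. 0" and S="{y. R < \<bar>y\<bar>}"])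
         (auto intro!: open_Collect_less continuous_intros simp: that R)
    then show ?thesis
      using smooth_compact_has_derivative[OF assms, of x] by (metis vector_derivative_at)
  qed
  show ?thesis
    by (rule that[of "\<bar>R\<bar> + 1"]) (auto intro!: R deriv_zero)
qed

lemma integral_compact_support:
  fixes h :: "real \<Rightarrow> real"
  assumes cont: "continuous_on UNIV h" and zero: "\<And>t. t \<notin> {a..b} \<Longrightarrow> h t = 0" and "a \<le> b"
  shows "integrable lborel h" "integral\<^sup>L lborel h = (LBINT t=a..b. h t)"
proof -
  have h_eq: "(\<lambda>t. indicator {a..b} t * h t) = h"
    using zero by (auto simp: indicator_def fun_eq_iff)
  have "set_integrable lborel {a..b} h"
    by (rule borel_integrable_atLeastAtMost') (rule continuous_on_subset[OF cont], simp)
  then show "integrable lborel h"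
    unfolding set_integrable_def using h_eq by simp
  show "integral\<^sup>L lborel h = (LBINT t=a..b. h t)"
    using \<open>a \<le> b\<close> by (simp add: interval_integral_Icc set_lebesgue_integral_def h_eq)
qed

lemma integral_derivative_compact_support:
  fixes F D :: "real \<Rightarrow> real"
  assumes deriv: "\<And>t. (F has_real_derivative D t) (at t)" and cont: "continuous_on UNIV D"
    and zero: "\<And>t. t \<notin> {a<..<b} \<Longrightarrow> F t = 0 \<and> D t = 0" and "a \<le> b"
  shows "integral\<^sup>L lborel D = 0"
proof -
  have "integral\<^sup>L lborel D = (LBINT t=a..b. D t)"
    by (rule integral_compact_support(2)[OF cont]) (use zero \<open>a \<le> b\<close> in auto)
  also have "\<dots> = F b - F a"
  proof (rule interval_integral_FTC_finite)
    show "continuous_on {min a b..max a b} D"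
      using cont by (rule continuous_on_subset) simp
    show "(F has_vector_derivative D x) (at x within {min a b..max a b})" for x
      using deriv[of x]
      by (simp add: has_real_derivative_iff_has_vector_derivative[symmetric] has_field_derivative_at_within)
  qed
  also have "\<dots> = 0"
    using zero[of a] zero[of b] by simp
  finally show ?thesis .
qed

section \<open>The ground-state substitution\<close>

lemma ground_state_representation:
  fixes V g g' :: "real \<Rightarrow> real" and f :: "real \<Rightarrow> complex" and c :: real
  assumes sc: "smooth_compact f" and V_cont: "continuous_on UNIV V"
    and g_deriv: "\<And>t. (g has_real_derivative g' t) (at t)" and g'_cont: "continuous_on UNIV g'"
  shows "schr_form V f + c * L2_norm_sq f =
           (LINT t|lborel. (cmod (vderiv f t + of_real (g t) * f t))\<^sup>2)
         + (LINT t|lborel. (V t + g' t - (g t)\<^sup>2 + c) * (cmod (f t))\<^sup>2)"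
proof -
  define f' where "f' = vderiv f"
  define n where "n t = (cmod (f t))\<^sup>2" for t
  define n' where "n' t = 2 * (Re (f t) * Re (f' t) + Im (f t) * Im (f' t))" for t
  define S where "S t = (cmod (f' t))\<^sup>2 + V t * n t" for t
  define A where "A t = (cmod (f' t + of_real (g t) * f t))\<^sup>2" for t
  define B where "B t = (V t + g' t - (g t)\<^sup>2 + c) * n t" for t
  define D where "D t = g' t * n t + g t * n' t" for t
  have f_deriv: "(f has_vector_derivative f' t) (at t)" for t
    unfolding f'_def by (rule smooth_compact_has_derivative[OF sc])
  note f_cont = smooth_compact_continuous[OF sc, folded f'_def]
  have g_cont: "continuous_on UNIV g"
    by (rule continuous_at_imp_continuous_on) (use g_deriv DERIV_isCont in blast)
  obtain a where "a > 0" and supp: "\<And>t. \<bar>t\<bar> \<ge> a \<Longrightarrow> f t = 0 \<and> f' t = 0"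
    using smooth_compact_support[OF sc] unfolding f'_def by blast
  have outside: "f t = 0 \<and> f' t = 0" if "t \<notin> {-a<..<a}" for t
    using supp that by auto
  have D_deriv: "((\<lambda>t. g t * n t) has_real_derivative D t) (at t)" for t
    unfolding n_def D_def n'_def cmod_power2
    using g_deriv[of t] has_field_derivative_Re[OF f_deriv[of t]] has_field_derivative_Im[OF f_deriv[of t]]
    by (auto intro!: derivative_eq_intros f_deriv simp: algebra_simps)
  text \<open>Completing the square pointwise.\<close>
  have pointwise: "S t + c * n t = A t + B t - D t" for t
    unfolding S_def A_def B_def D_def n_def n'_def cmod_power2
    by (simp add: algebra_simps power2_eq_square)
  have cont: "continuous_on UNIV S" "continuous_on UNIV n" "continuous_on UNIV A"
    "continuous_on UNIV B" "continuous_on UNIV D"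
    unfolding S_def n_def A_def B_def D_def n'_def
    using f_cont g_cont V_cont g'_cont by (auto intro!: continuous_intros)
  have zero: "S t = 0" "n t = 0" "A t = 0" "B t = 0" "D t = 0" if "t \<notin> {-a..a}" for t
    using outside[of t] that by (auto simp: S_def n_def A_def B_def D_def n'_def)
  have int: "integrable lborel S" "integrable lborel n" "integrable lborel A"
    "integrable lborel B" "integrable lborel D"
    using \<open>a > 0\<close> cont zero by (auto intro!: integral_compact_support(1)[of _ "-a" a])
  have D_int_zero: "integral\<^sup>L lborel D = 0"
    by (rule integral_derivative_compact_support[OF D_deriv cont(5), of "-a" a])
       (use outside \<open>a > 0\<close> in \<open>auto simp: D_def n_def n'_def\<close>)
  have "schr_form V f + c * L2_norm_sq f = integral\<^sup>L lborel S + c * integral\<^sup>L lborel n"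
    unfolding schr_form_def L2_norm_sq_def S_def n_def f'_def ..
  also have "\<dots> = (LINT t|lborel. S t + c * n t)"
    using int(1,2) by simp
  also have "\<dots> = (LINT t|lborel. A t + B t - D t)"
    by (simp add: pointwise)
  also have "\<dots> = integral\<^sup>L lborel A + integral\<^sup>L lborel B"
    using int(3-5) D_int_zero by simp
  finally show ?thesis
    unfolding A_def B_def n_def f'_def .
qed

lemma ground_state_lower_bound:
  fixes V g g' :: "real \<Rightarrow> real" and f :: "real \<Rightarrow> complex" and c :: real
  assumes sc: "smooth_compact f" and V_cont: "continuous_on UNIV V"
    and g_deriv: "\<And>t. (g has_real_derivative g' t) (at t)" and g'_cont: "continuous_on UNIV g'"
    and defect: "\<And>t. V t + g' t - (g t)\<^sup>2 \<ge> -c"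
  shows "schr_form V f \<ge> -c * L2_norm_sq f"
proof -
  have "0 \<le> V t + g' t - (g t)\<^sup>2 + c" for t
    using defect[of t] by linarith
  then have "0 \<le> (LINT t|lborel. (V t + g' t - (g t)\<^sup>2 + c) * (cmod (f t))\<^sup>2)"
    by (intro Bochner_Integration.integral_nonneg) simp
  moreover have "0 \<le> (LINT t|lborel. (cmod (vderiv f t + of_real (g t) * f t))\<^sup>2)"
    by simp
  ultimately show ?thesis
    using ground_state_representation[OF sc V_cont g_deriv g'_cont, of c] by linarith
qed


section \<open>The potential family and its Riccati defect\<close>

definition family_potential :: "real \<Rightarrow> real \<Rightarrow> real \<Rightarrow> real" where
  "family_potential \<alpha> \<beta> t =
     t\<^sup>2 / (2 * sqrt (\<alpha> + \<beta> * t\<^sup>2)) - 1 / (sqrt 2 * (\<alpha> + \<beta> * t\<^sup>2) powr (1/4))"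

definition riccati_g :: "real \<Rightarrow> real \<Rightarrow> real \<Rightarrow> real" where
  "riccati_g \<alpha> \<beta> t = t / (sqrt 2 * (\<alpha> + \<beta> * t\<^sup>2) powr (1/4)) - \<beta> * t / (4 * (\<alpha> + \<beta> * t\<^sup>2))"

definition riccati_g_deriv :: "real \<Rightarrow> real \<Rightarrow> real \<Rightarrow> real" where
  "riccati_g_deriv \<alpha> \<beta> t = 1 / (sqrt 2 * (\<alpha> + \<beta> * t\<^sup>2) powr (1/4))
     - \<beta> * t\<^sup>2 / (2 * sqrt 2 * (\<alpha> + \<beta> * t\<^sup>2) powr (1/4) * (\<alpha> + \<beta> * t\<^sup>2))
     - \<beta> * (\<alpha> - \<beta> * t\<^sup>2) / (4 * (\<alpha> + \<beta> * t\<^sup>2)\<^sup>2)"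

lemma quarter_root_deriv:
  fixes \<alpha> \<beta> :: real assumes "\<alpha> > 0" "\<beta> > 0"
  shows "((\<lambda>t. (\<alpha> + \<beta> * t\<^sup>2) powr (1/4)) has_real_derivative
           \<beta> * t * (\<alpha> + \<beta> * t\<^sup>2) powr (1/4) / (2 * (\<alpha> + \<beta> * t\<^sup>2))) (at t)"
proof -
  have w: "\<alpha> + \<beta> * t\<^sup>2 > 0" using assms by (simp add: add_pos_nonneg)
  have "(\<alpha> + \<beta> * t\<^sup>2) powr (1/4 - 1) = (\<alpha> + \<beta> * t\<^sup>2) powr (1/4) / (\<alpha> + \<beta> * t\<^sup>2) powr 1"
    by (rule powr_diff)
  with w have pow: "(\<alpha> + \<beta> * t\<^sup>2) powr (-(3/4)) = (\<alpha> + \<beta> * t\<^sup>2) powr (1/4) / (\<alpha> + \<beta> * t\<^sup>2)"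
    by simp
  show ?thesis
    using w by (auto intro!: derivative_eq_intros simp: pow) (simp add: field_simps)
qed

lemma riccati_g_has_derivative:
  fixes \<alpha> \<beta> :: real assumes "\<alpha> > 0" "\<beta> > 0"
  shows "(riccati_g \<alpha> \<beta> has_real_derivative riccati_g_deriv \<alpha> \<beta> t) (at t)"
proof -
  define w where "w = \<alpha> + \<beta> * t\<^sup>2"
  define q where "q = w powr (1/4)"
  have w: "w > 0" unfolding w_def using assms by (simp add: add_pos_nonneg)
  have q: "q > 0" unfolding q_def using w by simp
  have first: "((\<lambda>t. t / (sqrt 2 * (\<alpha> + \<beta> * t\<^sup>2) powr (1/4))) has_real_derivative
      1 / (sqrt 2 * q) - \<beta> * t\<^sup>2 / (2 * sqrt 2 * q * w)) (at t)"
  proof (rule DERIV_cong[OF DERIV_quotient[OF DERIV_ident DERIV_cmult[OF quarter_root_deriv[OF assms]]]])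
    show "sqrt 2 * (\<alpha> + \<beta> * t\<^sup>2) powr (1/4) \<noteq> 0"
      using q unfolding q_def w_def by simp
    show "(1 * (sqrt 2 * (\<alpha> + \<beta> * t\<^sup>2) powr (1/4))
          - sqrt 2 * (\<beta> * t * (\<alpha> + \<beta> * t\<^sup>2) powr (1/4) / (2 * (\<alpha> + \<beta> * t\<^sup>2))) * t)
          / (sqrt 2 * (\<alpha> + \<beta> * t\<^sup>2) powr (1/4)) ^ Suc (Suc 0)
        = 1 / (sqrt 2 * q) - \<beta> * t\<^sup>2 / (2 * sqrt 2 * q * w)"
      unfolding q_def[symmetric] w_def[symmetric] using q w
      by (simp add: field_simps power2_eq_square)
  qed
  have second: "((\<lambda>t. \<beta> * t / (4 * (\<alpha> + \<beta> * t\<^sup>2))) has_real_derivative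
      \<beta> * (\<alpha> - \<beta> * t\<^sup>2) / (4 * w\<^sup>2)) (at t)"
  proof (rule DERIV_cong[OF DERIV_quotient])
    show "((\<lambda>t. \<beta> * t) has_real_derivative \<beta>) (at t)"
      by (auto intro!: derivative_eq_intros)
    show "((\<lambda>t. 4 * (\<alpha> + \<beta> * t\<^sup>2)) has_real_derivative 8 * \<beta> * t) (at t)"
      by (auto intro!: derivative_eq_intros)
    show "4 * (\<alpha> + \<beta> * t\<^sup>2) \<noteq> 0"
      using w unfolding w_def by simp
    show "(\<beta> * (4 * (\<alpha> + \<beta> * t\<^sup>2)) - 8 * \<beta> * t * (\<beta> * t)) / (4 * (\<alpha> + \<beta> * t\<^sup>2)) ^ Suc (Suc 0)
        = \<beta> * (\<alpha> - \<beta> * t\<^sup>2) / (4 * w\<^sup>2)"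
    proof -
      have \<alpha>_eq: "\<alpha> = w - \<beta> * t\<^sup>2" unfolding w_def by simp
      show ?thesis
        unfolding w_def[symmetric] using w by (simp add: field_simps power2_eq_square \<alpha>_eq)
    qed
  qed
  show ?thesis
    using DERIV_diff[OF first second] unfolding riccati_g_def[abs_def] riccati_g_deriv_def w_def q_def by simp
qed

text \<open>The algebraic heart of the computation, with q standing for w^(1/4) and s for sqrt 2:
  the Riccati defect V + g' - g^2 collapses to a rational function of t.\<close>

lemma riccati_defect_identity:
  fixes q s w \<alpha> \<beta> t :: real
  assumes "q \<noteq> 0" "s\<^sup>2 = 2" "w > 0" "w = \<alpha> + \<beta> * t\<^sup>2"
  shows "(t\<^sup>2 / (2 * q\<^sup>2) - 1 / (s * q))
       + (1 / (s * q) - \<beta> * t\<^sup>2 / (2 * s * q * w) - \<beta> * (\<alpha> - \<beta> * t\<^sup>2) / (4 * w\<^sup>2))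
       - (t / (s * q) - \<beta> * t / (4 * w))\<^sup>2
       = -(\<beta> / 4) * (\<alpha> - 3 * \<beta> * t\<^sup>2 / 4) / w\<^sup>2"
proof -
  have s_nz: "s \<noteq> 0" using assms(2) by auto
  have square: "(t / (s * q))\<^sup>2 = t\<^sup>2 / (2 * q\<^sup>2)"
    using assms(2) by (simp add: power_divide power_mult_distrib)
  have cross: "2 * (t / (s * q)) * (\<beta> * t / (4 * w)) = \<beta> * t\<^sup>2 / (2 * s * q * w)"
    using assms(1,3) s_nz by (simp add: field_simps power2_eq_square)
  have "(t\<^sup>2 / (2 * q\<^sup>2) - 1 / (s * q))
       + (1 / (s * q) - \<beta> * t\<^sup>2 / (2 * s * q * w) - \<beta> * (\<alpha> - \<beta> * t\<^sup>2) / (4 * w\<^sup>2))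
       - (t / (s * q) - \<beta> * t / (4 * w))\<^sup>2
       = - \<beta> * (\<alpha> - \<beta> * t\<^sup>2) / (4 * w\<^sup>2) - (\<beta> * t / (4 * w))\<^sup>2"
    using square cross by (simp add: power2_diff)
  also have "\<dots> = -(\<beta> / 4) * (\<alpha> - 3 * \<beta> * t\<^sup>2 / 4) / w\<^sup>2"
    using assms(3) by (simp add: field_simps power2_eq_square)
  finally show ?thesis .
qed

lemma family_riccati_defect:
  fixes \<alpha> \<beta> t :: real assumes "\<alpha> > 0" "\<beta> > 0"
  shows "family_potential \<alpha> \<beta> t + riccati_g_deriv \<alpha> \<beta> t - (riccati_g \<alpha> \<beta> t)\<^sup>2
       = -(\<beta> / 4) * (\<alpha> - 3 * \<beta> * t\<^sup>2 / 4) / (\<alpha> + \<beta> * t\<^sup>2)\<^sup>2"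
proof -
  define w where "w = \<alpha> + \<beta> * t\<^sup>2"
  define q where "q = w powr (1/4)"
  have w: "w > 0" unfolding w_def using assms by (simp add: add_pos_nonneg)
  have sqrt_w: "sqrt w = q\<^sup>2"
    unfolding q_def using w by (simp add: powr_power powr_half_sqrt[symmetric])
  show ?thesis
    unfolding family_potential_def riccati_g_def riccati_g_deriv_def w_def[symmetric] q_def[symmetric] sqrt_w
    by (rule riccati_defect_identity) (use w in \<open>auto simp: q_def w_def\<close>)
qed

text \<open>Its minimum is attained at t = 0 and equals -\<beta>/(4\<alpha>).\<close>

lemma family_riccati_defect_bound:
  fixes \<alpha> \<beta> t :: real assumes "\<alpha> > 0" "\<beta> > 0"
  shows "-(\<beta> / (4 * \<alpha>)) \<le> -(\<beta> / 4) * (\<alpha> - 3 * \<beta> * t\<^sup>2 / 4) / (\<alpha> + \<beta> * t\<^sup>2)\<^sup>2"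
proof -
  define w where "w = \<alpha> + \<beta> * t\<^sup>2"
  have "\<alpha> \<le> w" unfolding w_def using assms by simp
  then have "(\<alpha> - 3 * \<beta> * t\<^sup>2 / 4) / w\<^sup>2 \<le> \<alpha> / \<alpha>\<^sup>2"
    using assms by (intro frac_le power_mono) auto
  also have "\<dots> = 1 / \<alpha>" by (simp add: power2_eq_square)
  finally have "(\<beta> / 4) * ((\<alpha> - 3 * \<beta> * t\<^sup>2 / 4) / w\<^sup>2) \<le> (\<beta> / 4) * (1 / \<alpha>)"
    using assms by (intro mult_left_mono) auto
  then show ?thesis unfolding w_def by simp
qed

lemma family_form_lower_bound:
  fixes \<alpha> \<beta> :: real and f :: "real \<Rightarrow> complex"
  assumes "\<alpha> > 0" "\<beta> > 0" "smooth_compact f"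
  shows "schr_form (family_potential \<alpha> \<beta>) f \<ge> -(\<beta> / (4 * \<alpha>)) * L2_norm_sq f"
proof (rule ground_state_lower_bound[OF assms(3)])
  have w: "\<alpha> + \<beta> * t\<^sup>2 > 0" for t
    using assms by (simp add: add_pos_nonneg)
  show "continuous_on UNIV (family_potential \<alpha> \<beta>)"
    unfolding family_potential_def[abs_def] using w
    by (auto intro!: continuous_intros simp: less_imp_neq[OF w, symmetric])
  show "continuous_on UNIV (riccati_g_deriv \<alpha> \<beta>)"
    unfolding riccati_g_deriv_def[abs_def] using w
    by (auto intro!: continuous_intros simp: less_imp_neq[OF w, symmetric])
  show "(riccati_g \<alpha> \<beta> has_real_derivative riccati_g_deriv \<alpha> \<beta> t) (at t)" for t
    using riccati_g_has_derivative[OF assms(1,2)] .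
  show "-(\<beta> / (4 * \<alpha>)) \<le> family_potential \<alpha> \<beta> t + riccati_g_deriv \<alpha> \<beta> t - (riccati_g \<alpha> \<beta> t)\<^sup>2" for t
    unfolding family_riccati_defect[OF assms(1,2)] by (rule family_riccati_defect_bound[OF assms(1,2)])
qed

theorem proposition1:
  shows "(\<forall>eps::real. eps > 0 \<longrightarrow>
            (\<forall>\<phi>. smooth_compact \<phi> \<longrightarrow>
               schr_form (Vhat eps) \<phi> \<ge> - (eps / 4) * L2_norm_sq \<phi>))
       \<and> (\<forall>u::real. u > 0 \<longrightarrow>
            (\<forall>\<phi>. smooth_compact \<phi> \<longrightarrow>
               schr_form (Vu u) \<phi> \<ge> - (1 / (4 * u\<^sup>2)) * L2_norm_sq \<phi>))"
proof (intro conjI allI impI)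
  fix eps :: real and \<phi> assume "eps > 0" "smooth_compact \<phi>"
  moreover have "Vhat eps = family_potential 1 eps"
    by (simp add: fun_eq_iff Vhat_def family_potential_def)
  ultimately show "schr_form (Vhat eps) \<phi> \<ge> - (eps / 4) * L2_norm_sq \<phi>"
    using family_form_lower_bound[of 1 eps \<phi>] by simp
next
  fix u :: real and \<phi> assume "u > 0" "smooth_compact \<phi>"
  moreover have "Vu u = family_potential (u\<^sup>2) 1"
    by (simp add: fun_eq_iff Vu_def family_potential_def)
  ultimately show "schr_form (Vu u) \<phi> \<ge> - (1 / (4 * u\<^sup>2)) * L2_norm_sq \<phi>"
    using family_form_lower_bound[of "u\<^sup>2" 1 \<phi>] by simp
qed

end
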